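(* Let $\mathcal{X}\subseteq\mathbb{R}^d$ be nonempty, closed and convex, and let $f=\frac1n\sum_{i=1}^nf_i$, where each $f_i:\mathbb{R}^d\to\mathbb{R}$ is differentiable, $\mu_i$-strongly convex and $L_i$-smooth on an open convex set containing $\mathcal{X}$, with $0<\mu_i\le L_i$. Let $x_\star\in\operatorname{arg\,min}_{x\in\mathcal{X}}f(x)$, $x_{\star,i}\in\operatorname{arg\,min}_{x\in\mathcal{X}}f_i(x)$, and $D:=\max_i\|x_{\star,i}-x_\star\|$. Define $\theta_i:=\frac{2\sqrt{\mu_iL_i}}{L_i+\mu_i}$, $\rho_i:=\frac{L_i-\mu_i}{L_i+\mu_i}=\sqrt{1-\theta_i^2}$, $\bar\rho:=\frac1n\sum_{i=1}^n\rho_i$. Let $x_0\in\mathcal{X}$, let $i_k$ be sampled uniformly from $\{1,\dots,n\}$ independently of the past, and let $x_{k+1}\in\operatorname{arg\,min}_{z\in\mathcal{X}\cap\mathcal{B}(x_k,t_k)}\langle\nabla f_{i_k}(x_k),z\rangle$ with $t_k:=\theta_{i_k}\|x_k-x_{\star,i_k}\|$. Then for every $k\ge0$, $\|x_{k+1}-x_{\star,i_k}\|^2\le\rho_{i_k}^2\|x_k-x_{\star,i_k}\|^2$, and consequently $$\mathbb{E}\|x_k-x_\star\|\le\bar\rho^k\|x_0-x_\star\|+\frac{1+\bar\rho}{1-\bar\rho}D.$$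
   Context: $\|\cdot\|$ is the Euclidean norm, $\mathcal{B}(x,t):=\{y:\|y-x\|\le t\}$; $L_i$-smooth: $\nabla f_i$ is $L_i$-Lipschitz; $\mu_i$-strongly convex: $f_i(y)\ge f_i(x)+\langle\nabla f_i(x),y-x\rangle+\frac{\mu_i}2\|y-x\|^2$. *)

theory Defs
  imports "HOL-Analysis.Analysis"
begin

end

theory Submission
  imports Defs
begin

(*
  Fix i and write c = x_{star,i}, t = theta_i |x_k - c|, u = x_k - c, e = x_{k+1} - x_k and
  a = grad f_i(x_k) - grad f_i(c).  Strong convexity and smoothness give the co-coercivity
  inequality |a|^2 + mu L |u|^2 <= (L + mu) <a, u>, hence <a, u> >= t |a| by AM-GM.
  If x_{k+1} lies on the sphere of radius t with c behind its tangent plane, then <e, u> <= -t^2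
  at once.  Otherwise x_{k+1} can still move towards c inside the ball, so its optimality gives
  <grad f_i(x_k), c - x_{k+1}> >= 0; together with the first-order optimality of c this yields
  <a, e + u> <= 0, which forces e = -t a / |a| and again <e, u> <= -t^2.  Expanding
  |x_{k+1} - c|^2 = |e + u|^2 <= |u|^2 - t^2 = rho_i^2 |u|^2 gives the contraction.
  The triangle inequality through c turns it into
  |x_{k+1} - x_star| <= rho_i |x_k - x_star| + (1 + rho_i) D, and averaging over the uniformly
  sampled index gives an affine recursion for the mean distance.
*)

lemma lipschitz_gradient_quadratic_upper_bound:
  fixes h :: "'a::real_inner \<Rightarrow> real" and G :: "'a \<Rightarrow> 'a"
  assumes gradient: "\<And>y. y \<in> U \<Longrightarrow> (h has_derivative (\<lambda>d. inner (G y) d)) (at y)"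
    and lipschitz: "\<And>y z. y \<in> U \<Longrightarrow> z \<in> U \<Longrightarrow> norm (G y - G z) \<le> L * norm (y - z)"
    and segment: "closed_segment v w \<subseteq> U"
  shows "h w \<le> h v + inner (G v) (w - v) + L / 2 * norm (w - v) ^ 2"
proof -
  define F where
    "F s = h (v + s *\<^sub>R (w - v)) - (s * inner (G v) (w - v) + L / 2 * s ^ 2 * norm (w - v) ^ 2)" for s
  have "F 1 \<le> F 0"
  proof (rule DERIV_nonpos_imp_nonincreasing[of 0 1 F])
    fix s :: real assume s: "0 \<le> s" "s \<le> 1"
    define p where "p = v + s *\<^sub>R (w - v)"
    have "p = (1 - s) *\<^sub>R v + s *\<^sub>R w" unfolding p_def by (simp add: algebra_simps)
    then have "p \<in> U" using segment s unfolding closed_segment_def by blast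
    have "((\<lambda>s. v + s *\<^sub>R (w - v)) has_derivative (\<lambda>ds. ds *\<^sub>R (w - v))) (at s)"
      by (auto intro!: derivative_eq_intros)
    from has_derivative_compose[OF this gradient[OF \<open>p \<in> U\<close>, unfolded p_def]]
    have h_deriv: "((\<lambda>s. h (v + s *\<^sub>R (w - v))) has_real_derivative inner (G p) (w - v)) (at s)"
      by (simp add: p_def has_field_derivative_def mult_commute_abs)
    have "((\<lambda>s. s * inner (G v) (w - v) + L / 2 * s ^ 2 * norm (w - v) ^ 2) has_real_derivative
        inner (G v) (w - v) + L * s * norm (w - v) ^ 2) (at s)"
      by (auto intro!: derivative_eq_intros)
    from DERIV_diff[OF h_deriv this]
    have "(F has_real_derivative inner (G p) (w - v) - inner (G v) (w - v) - L * s * norm (w - v) ^ 2) (at s)"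
      by (simp add: F_def[abs_def] algebra_simps)
    moreover have "inner (G p) (w - v) - inner (G v) (w - v) \<le> L * s * norm (w - v) ^ 2"
    proof -
      have "inner (G p) (w - v) - inner (G v) (w - v) \<le> norm (G p - G v) * norm (w - v)"
        using norm_cauchy_schwarz[of "G p - G v" "w - v"] by (simp add: inner_diff_left)
      also have "\<dots> \<le> L * norm (p - v) * norm (w - v)"
        using lipschitz[OF \<open>p \<in> U\<close>, of v] segment by (intro mult_right_mono) auto
      also have "\<dots> = L * s * norm (w - v) ^ 2" using s by (simp add: p_def power2_eq_square)
      finally show ?thesis .
    qed
    ultimately show "\<exists>y. (F has_real_derivative y) (at s) \<and> y \<le> 0" by auto
  qed simp
  then show ?thesis unfolding F_def by simp
qed

lemma arg_min_convex_first_order: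
  fixes h :: "'a::real_normed_vector \<Rightarrow> real"
  assumes derivative: "(h has_derivative h') (at c)"
    and "convex X" "c \<in> X" "v \<in> X"
    and minimal: "\<And>y. y \<in> X \<Longrightarrow> h c \<le> h y"
  shows "0 \<le> h' (v - c)"
proof (rule ccontr)
  assume "\<not> 0 \<le> h' (v - c)"
  have "((\<lambda>s. c + s *\<^sub>R (v - c)) has_derivative (\<lambda>s. s *\<^sub>R (v - c))) (at 0)"
    by (auto intro!: derivative_eq_intros)
  from has_derivative_compose[OF this, of h h'] derivative
  have "((\<lambda>s. h (c + s *\<^sub>R (v - c))) has_real_derivative h' (v - c)) (at 0)"
    using linear_scale[OF has_derivative_linear[OF derivative]]
    by (simp add: has_field_derivative_def mult_commute_abs)
  from has_real_derivative_neg_dec_right[OF this] \<open>\<not> 0 \<le> h' (v - c)\<close>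
  obtain d where "d > 0" and decrease: "\<forall>s>0. s < d \<longrightarrow> h (c + s *\<^sub>R (v - c)) < h c"
    by auto
  define s where "s = min 1 (d / 2)"
  have "0 < s" "s < d" "s \<le> 1" using \<open>d > 0\<close> by (auto simp: s_def)
  moreover have "c + s *\<^sub>R (v - c) = (1 - s) *\<^sub>R c + s *\<^sub>R v" by (simp add: algebra_simps)
  ultimately have "c + s *\<^sub>R (v - c) \<in> X" using assms(2-4) by (simp add: convexD)
  then have "h c \<le> h (c + s *\<^sub>R (v - c))" by (rule minimal)
  with decrease \<open>0 < s\<close> \<open>s < d\<close> show False by auto
qed

lemma convex_smooth_gradient_gap:
  fixes \<phi> :: "'a::real_inner \<Rightarrow> real" and H :: "'a \<Rightarrow> 'a"
  assumes convex: "\<And>x y. x \<in> U \<Longrightarrow> y \<in> U \<Longrightarrow> \<phi> x + inner (H x) (y - x) \<le> \<phi> y"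
    and smooth: "\<And>x y. closed_segment x y \<subseteq> U \<Longrightarrow>
                   \<phi> y \<le> \<phi> x + inner (H x) (y - x) + K / 2 * norm (y - x) ^ 2"
    and "K > 0" and "v \<in> U"
    and segment: "closed_segment w (w - (1 / K) *\<^sub>R (H w - H v)) \<subseteq> U"
  shows "\<phi> v + inner (H v) (w - v) + norm (H w - H v) ^ 2 / (2 * K) \<le> \<phi> w"
proof -
  define b where "b = H w - H v"
  define p where "p = w - (1 / K) *\<^sub>R b"
  have "p \<in> U" using segment by (auto simp: p_def b_def)
  have "\<phi> v + inner (H v) (p - v) \<le> \<phi> p" using convex \<open>v \<in> U\<close> \<open>p \<in> U\<close> .
  also have "\<phi> p \<le> \<phi> w + inner (H w) (p - w) + K / 2 * norm (p - w) ^ 2"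
    unfolding p_def b_def by (rule smooth[OF segment])
  finally have "\<phi> v + inner (H v) (w - v) - inner (H v) b / K
      \<le> \<phi> w - inner (H w) b / K + norm b ^ 2 / (2 * K)"
    using \<open>K > 0\<close> by (simp add: p_def inner_diff_right power_divide power2_eq_square)
  moreover have "inner (H w) b / K = inner (H v) b / K + norm b ^ 2 / (2 * K) + norm b ^ 2 / (2 * K)"
    using \<open>K > 0\<close> by (simp add: b_def power2_norm_eq_inner inner_diff_left field_simps)
  ultimately show ?thesis by (simp add: b_def)
qed

lemma convex_smooth_cocoercive:
  fixes \<phi> :: "'a::real_inner \<Rightarrow> real" and H :: "'a \<Rightarrow> 'a"
  assumes convex: "\<And>x y. x \<in> U \<Longrightarrow> y \<in> U \<Longrightarrow> \<phi> x + inner (H x) (y - x) \<le> \<phi> y"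
    and smooth: "\<And>x y. closed_segment x y \<subseteq> U \<Longrightarrow>
                   \<phi> y \<le> \<phi> x + inner (H x) (y - x) + K / 2 * norm (y - x) ^ 2"
    and "K > 0" and "v \<in> U" and "w \<in> U"
    and "closed_segment w (w - (1 / K) *\<^sub>R (H w - H v)) \<subseteq> U"
    and "closed_segment v (v - (1 / K) *\<^sub>R (H v - H w)) \<subseteq> U"
  shows "norm (H w - H v) ^ 2 \<le> K * inner (H w - H v) (w - v)"
proof -
  have "\<phi> v + inner (H v) (w - v) + norm (H w - H v) ^ 2 / (2 * K) \<le> \<phi> w"
    "\<phi> w + inner (H w) (v - w) + norm (H v - H w) ^ 2 / (2 * K) \<le> \<phi> v"
    using convex_smooth_gradient_gap[OF convex smooth] assms(3-) by blast+
  then have "norm (H w - H v) ^ 2 / K \<le> inner (H w - H v) (w - v)"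
    by (simp add: norm_minus_commute inner_diff_left inner_diff_right field_simps)
  then show ?thesis using \<open>K > 0\<close> by (simp add: field_simps)
qed

lemma cocoercive_iff_gradient_step_contraction:
  fixes a u :: "'a::real_inner"
  assumes "\<mu> \<le> \<Lambda>" "0 < \<Lambda> + \<mu>"
  shows "norm a ^ 2 + \<mu> * \<Lambda> * norm u ^ 2 \<le> (\<Lambda> + \<mu>) * inner a u
     \<longleftrightarrow> norm (u - (2 / (\<Lambda> + \<mu>)) *\<^sub>R a) \<le> (\<Lambda> - \<mu>) / (\<Lambda> + \<mu>) * norm u"
proof -
  define s where "s = 2 / (\<Lambda> + \<mu>)"
  define gap where "gap = norm a ^ 2 + \<mu> * \<Lambda> * norm u ^ 2 - (\<Lambda> + \<mu>) * inner a u"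
  have "((\<Lambda> + \<mu>) * norm (u - s *\<^sub>R a)) ^ 2
      = (\<Lambda> + \<mu>) ^ 2 * (inner u u - 2 * s * inner a u + s ^ 2 * inner a a)"
    unfolding power_mult_distrib power2_norm_eq_inner
    by (simp add: inner_commute[of u a] power2_eq_square algebra_simps)
  also have "\<dots> = (\<Lambda> + \<mu>) ^ 2 * inner u u - 2 * ((\<Lambda> + \<mu>) * s) * (\<Lambda> + \<mu>) * inner a u
      + ((\<Lambda> + \<mu>) * s) ^ 2 * inner a a"
    by (simp add: power2_eq_square algebra_simps)
  also have "(\<Lambda> + \<mu>) * s = 2" using assms by (simp add: s_def field_simps)
  finally have identity: "((\<Lambda> + \<mu>) * norm (u - s *\<^sub>R a)) ^ 2
      = ((\<Lambda> - \<mu>) * norm u) ^ 2 + 4 * gap"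
    by (simp add: gap_def dot_square_norm power2_eq_square algebra_simps)
  have "norm (u - s *\<^sub>R a) \<le> (\<Lambda> - \<mu>) / (\<Lambda> + \<mu>) * norm u
      \<longleftrightarrow> (\<Lambda> + \<mu>) * norm (u - s *\<^sub>R a) \<le> (\<Lambda> - \<mu>) * norm u"
    using assms by (simp add: pos_le_divide_eq mult.commute)
  also have "\<dots> \<longleftrightarrow> ((\<Lambda> + \<mu>) * norm (u - s *\<^sub>R a)) ^ 2 \<le> ((\<Lambda> - \<mu>) * norm u) ^ 2"
    using assms by (intro power_mono_iff[symmetric]) auto
  also have "\<dots> \<longleftrightarrow> gap \<le> 0" unfolding identity by simp
  also have "\<dots> \<longleftrightarrow> norm a ^ 2 + \<mu> * \<Lambda> * norm u ^ 2 \<le> (\<Lambda> + \<mu>) * inner a u"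
    by (simp add: gap_def)
  finally show ?thesis unfolding s_def by blast
qed

lemma norm_diff_le_of_local_lipschitz_on_segment:
  fixes F :: "'a::real_normed_vector \<Rightarrow> 'b::real_normed_vector"
  assumes "\<delta> > 0"
    and local: "\<And>p q. p \<in> closed_segment a b \<Longrightarrow> q \<in> closed_segment a b \<Longrightarrow> norm (p - q) \<le> \<delta>
                  \<Longrightarrow> norm (F p - F q) \<le> \<kappa> * norm (p - q)"
  shows "norm (F b - F a) \<le> \<kappa> * norm (b - a)"
proof -
  obtain N :: nat where N: "norm (b - a) / \<delta> < real N" using reals_Archimedean2 by blast
  moreover have "0 \<le> norm (b - a) / \<delta>" using \<open>\<delta> > 0\<close> by simp
  ultimately have "real N > 0" by linarith
  define p where "p j = a + (real j / real N) *\<^sub>R (b - a)" for j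
  have p_segment: "p j \<in> closed_segment a b" if "j \<le> N" for j
  proof -
    have "p j = (1 - real j / real N) *\<^sub>R a + (real j / real N) *\<^sub>R b"
      by (simp add: p_def algebra_simps)
    moreover have "0 \<le> real j / real N" "real j / real N \<le> 1" using that \<open>real N > 0\<close> by auto
    ultimately show ?thesis unfolding in_segment by blast
  qed
  have p_step: "p (Suc j) - p j = (1 / real N) *\<^sub>R (b - a)" for j
    by (simp add: p_def scaleR_diff_left[symmetric] diff_divide_distrib[symmetric])
  have "norm (b - a) / real N \<le> \<delta>"
    using N \<open>\<delta> > 0\<close> \<open>real N > 0\<close> by (simp add: divide_le_eq pos_divide_less_eq mult.commute)
  then have step_small: "norm (p (Suc j) - p j) \<le> \<delta>" for j
    unfolding p_step using \<open>real N > 0\<close> by simp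
  have "F b - F a = (\<Sum>j<N. F (p (Suc j)) - F (p j))"
    using sum_lessThan_telescope[of "\<lambda>j. F (p j)" N] \<open>real N > 0\<close> by (simp add: p_def)
  then have "norm (F b - F a) \<le> (\<Sum>j<N. norm (F (p (Suc j)) - F (p j)))"
    by (simp add: norm_sum)
  also have "\<dots> \<le> (\<Sum>j<N. \<kappa> * norm (p (Suc j) - p j))"
    using local p_segment step_small by (intro sum_mono) auto
  also have "\<dots> = \<kappa> * norm (b - a)"
    unfolding p_step using \<open>real N > 0\<close> by simp
  finally show ?thesis .
qed

lemma exists_small_step_quadratic_le:
  fixes p q \<delta> :: real
  assumes "0 \<le> q" "0 \<le> \<delta>" and "0 < \<delta> \<or> p < 0"
  shows "\<exists>s. 0 < s \<and> s \<le> 1 \<and> 2 * s * p + s ^ 2 * q \<le> \<delta>"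
proof (cases "p < 0")
  case True
  define s where "s = min 1 (- p / (q + 1))"
  have "0 < s" "s \<le> 1" using True \<open>0 \<le> q\<close> by (auto simp: s_def divide_neg_pos)
  have "s * q \<le> s * (q + 1)" using \<open>0 < s\<close> by simp
  also have "\<dots> \<le> - p / (q + 1) * (q + 1)"
    using \<open>0 \<le> q\<close> by (intro mult_right_mono) (auto simp: s_def)
  also have "\<dots> = - p" using \<open>0 \<le> q\<close> by simp
  finally have "s * (s * q) \<le> s * (- p)" using \<open>0 < s\<close> by (intro mult_left_mono) auto
  then have "2 * s * p + s ^ 2 * q \<le> s * p" by (simp add: power2_eq_square algebra_simps)
  also have "\<dots> \<le> \<delta>" using \<open>0 < s\<close> True \<open>0 \<le> \<delta>\<close> mult_pos_neg[of s p] by linarith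
  finally show ?thesis using \<open>0 < s\<close> \<open>s \<le> 1\<close> by blast
next
  case False
  with assms(3) have "0 < \<delta>" by simp
  define s where "s = min 1 (\<delta> / (2 * p + q + 1))"
  have "0 < 2 * p + q + 1" using False \<open>0 \<le> q\<close> by simp
  then have "0 < s" "s \<le> 1" using \<open>0 < \<delta>\<close> by (auto simp: s_def)
  have "s ^ 2 \<le> s" using \<open>0 < s\<close> \<open>s \<le> 1\<close> by (simp add: power2_eq_square mult_left_le_one_le)
  then have "s ^ 2 * q \<le> s * q" using \<open>0 \<le> q\<close> by (simp add: mult_right_mono)
  then have "2 * s * p + s ^ 2 * q \<le> s * (2 * p + q + 1)" using \<open>0 < s\<close> by (simp add: algebra_simps)
  also have "\<dots> \<le> \<delta> / (2 * p + q + 1) * (2 * p + q + 1)"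
    using \<open>0 < 2 * p + q + 1\<close> by (intro mult_right_mono) (auto simp: s_def)
  also have "\<dots> = \<delta>" using \<open>0 < 2 * p + q + 1\<close> by simp
  finally show ?thesis using \<open>0 < s\<close> \<open>s \<le> 1\<close> by blast
qed

lemma exists_step_into_cball:
  fixes e d :: "'a::real_inner"
  assumes "norm e \<le> t" and "norm e < t \<or> inner e d < 0"
  shows "\<exists>s. 0 < s \<and> s \<le> 1 \<and> norm (e + s *\<^sub>R d) \<le> t"
proof -
  have "0 \<le> t" using assms(1) norm_ge_zero order_trans by blast
  have "norm e ^ 2 \<le> t ^ 2" "norm e < t \<longrightarrow> norm e ^ 2 < t ^ 2"
    using assms(1) by (auto simp: power_mono power_strict_mono)
  with assms(2) obtain s where "0 < s" "s \<le> 1"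
    and "2 * s * inner e d + s ^ 2 * norm d ^ 2 \<le> t ^ 2 - norm e ^ 2"
    using exists_small_step_quadratic_le[of "norm d ^ 2" "t ^ 2 - norm e ^ 2" "inner e d"] by auto
  moreover have "norm (e + s *\<^sub>R d) ^ 2 = norm e ^ 2 + 2 * s * inner e d + s ^ 2 * norm d ^ 2"
    unfolding power2_norm_eq_inner by (simp add: inner_commute[of d e] power2_eq_square algebra_simps)
  ultimately have "norm (e + s *\<^sub>R d) ^ 2 \<le> t ^ 2" by linarith
  with \<open>0 \<le> t\<close> \<open>0 < s\<close> \<open>s \<le> 1\<close> show ?thesis using power2_le_imp_le by blast
qed

lemma cball_halfspace_inner_bound:
  fixes a e u :: "'a::real_inner"
  assumes "norm e \<le> t" and "inner a (e + u) \<le> 0" and "t * norm a \<le> inner a u"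
    and "a = 0 \<Longrightarrow> t = 0"
  shows "inner e u \<le> - (t ^ 2)"
proof (cases "a = 0")
  case True
  then show ?thesis using assms by simp
next
  case False
  define A where "A = norm a"
  have "A > 0" using False by (simp add: A_def)
  have "0 \<le> t" using assms(1) norm_ge_zero order_trans by blast
  have "inner a e \<le> - (t * A)" using assms(2,3) by (simp add: A_def inner_add_right)
  have "norm (A *\<^sub>R e + t *\<^sub>R a) ^ 2 = A ^ 2 * norm e ^ 2 + 2 * t * A * inner a e + t ^ 2 * A ^ 2"
    using dot_square_norm[of a]
    unfolding power2_norm_eq_inner A_def[symmetric]
    by (simp add: inner_commute[of e a] power2_eq_square algebra_simps)
  also have "\<dots> \<le> A ^ 2 * t ^ 2 + 2 * t * A * (- (t * A)) + t ^ 2 * A ^ 2"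
    using assms(1) \<open>inner a e \<le> - (t * A)\<close> \<open>0 \<le> t\<close> \<open>A > 0\<close>
    by (intro add_mono mult_left_mono power_mono order_refl) auto
  also have "\<dots> = 0" by (simp add: power2_eq_square algebra_simps)
  finally have "A *\<^sub>R e = - t *\<^sub>R a" by (simp add: add_eq_0_iff2)
  then have "A * inner e u = - t * inner a u" by (metis inner_scaleR_left)
  also have "\<dots> \<le> A * - (t ^ 2)"
    using mult_left_mono[OF assms(3) \<open>0 \<le> t\<close>] by (simp add: A_def power2_eq_square algebra_simps)
  finally show ?thesis using mult_le_cancel_left_pos[OF \<open>A > 0\<close>] by blast
qed

lemma norm_add_sq_le_of_inner_le:
  fixes e u :: "'a::real_inner"
  assumes "norm e \<le> t" and "inner e u \<le> - (t ^ 2)"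
  shows "norm (e + u) ^ 2 \<le> norm u ^ 2 - (t ^ 2)"
proof -
  have "norm (e + u) ^ 2 = norm e ^ 2 + 2 * inner e u + norm u ^ 2"
    unfolding power2_norm_eq_inner by (simp add: inner_add_left inner_add_right inner_commute[of u e])
  moreover have "norm e ^ 2 \<le> t ^ 2" using assms(1) by (simp add: power_mono)
  ultimately show ?thesis using assms(2) by linarith
qed

lemma contraction_factor_sq:
  fixes \<mu> L r :: real
  assumes "0 \<le> \<mu>" "0 \<le> L" "0 < L + \<mu>"
  shows "r ^ 2 - (2 * sqrt (\<mu> * L) / (L + \<mu>) * r) ^ 2 = ((L - \<mu>) / (L + \<mu>)) ^ 2 * r ^ 2"
proof -
  have "(L - \<mu>) ^ 2 = (L + \<mu>) ^ 2 - (2 * sqrt (\<mu> * L)) ^ 2"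
    using assms by (simp add: power2_eq_square algebra_simps)
  then have "((L - \<mu>) / (L + \<mu>)) ^ 2 = ((L + \<mu>) ^ 2 - (2 * sqrt (\<mu> * L)) ^ 2) / (L + \<mu>) ^ 2"
    by (simp only: power_divide)
  also have "\<dots> = 1 - (2 * sqrt (\<mu> * L) / (L + \<mu>)) ^ 2"
    using assms by (simp only: diff_divide_distrib power_divide) simp
  moreover have "r ^ 2 - (a * r) ^ 2 = (1 - a ^ 2) * r ^ 2" for a :: real
    by (simp add: algebra_simps)
  ultimately show ?thesis by (simp only:)
qed

lemma bregman_quadratic_tilt:
  fixes x y g :: "'a::real_inner"
  shows "(b - \<mu> / 2 * norm y ^ 2) - (a - \<mu> / 2 * norm x ^ 2) - inner (g - \<mu> *\<^sub>R x) (y - x)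
       = b - a - inner g (y - x) - \<mu> / 2 * norm (y - x) ^ 2"
  unfolding power2_norm_eq_inner
  by (simp add: inner_commute[of x y] algebra_simps)

lemma cocoercive_of_shifted:
  fixes a u :: "'a::real_inner"
  assumes "norm (a - \<mu> *\<^sub>R u) ^ 2 \<le> (\<Lambda> - \<mu>) * inner (a - \<mu> *\<^sub>R u) u"
  shows "norm a ^ 2 + \<mu> * \<Lambda> * norm u ^ 2 \<le> (\<Lambda> + \<mu>) * inner a u"
proof -
  have "norm (a - \<mu> *\<^sub>R u) ^ 2 = norm a ^ 2 - 2 * \<mu> * inner a u + \<mu> ^ 2 * norm u ^ 2"
    unfolding power2_norm_eq_inner
    by (simp add: inner_commute[of u a] power2_eq_square algebra_simps)
  moreover have "inner (a - \<mu> *\<^sub>R u) u = inner a u - \<mu> * norm u ^ 2"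
    by (simp add: dot_square_norm inner_diff_left)
  ultimately have "norm a ^ 2 - 2 * \<mu> * inner a u + \<mu> ^ 2 * norm u ^ 2
      \<le> (\<Lambda> - \<mu>) * (inner a u - \<mu> * norm u ^ 2)"
    using assms by simp
  then show ?thesis by (simp add: power2_eq_square algebra_simps)
qed

lemma cball_linear_arg_min_first_order:
  fixes g y z c :: "'a::real_inner"
  assumes "convex X" "c \<in> X"
    and z_min: "is_arg_min (\<lambda>z. inner g z) (\<lambda>z. z \<in> X \<inter> cball y t) z"
    and "norm (z - y) < t \<or> inner (z - y) (c - z) < 0"
  shows "0 \<le> inner g (c - z)"
proof -
  have "z \<in> X" and "norm (z - y) \<le> t"
    and z_le: "\<And>v. v \<in> X \<Longrightarrow> norm (v - y) \<le> t \<Longrightarrow> inner g z \<le> inner g v"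
    using z_min by (auto simp: is_arg_min_linorder dist_norm norm_minus_commute)
  from exists_step_into_cball[OF \<open>norm (z - y) \<le> t\<close> assms(4)]
  obtain s where "0 < s" "s \<le> 1" and s_step: "norm ((z - y) + s *\<^sub>R (c - z)) \<le> t" by blast
  have "z + s *\<^sub>R (c - z) = (1 - s) *\<^sub>R z + s *\<^sub>R c" by (simp add: algebra_simps)
  then have "z + s *\<^sub>R (c - z) \<in> X"
    using \<open>convex X\<close> \<open>z \<in> X\<close> \<open>c \<in> X\<close> \<open>0 < s\<close> \<open>s \<le> 1\<close> by (simp add: convexD)
  moreover have "norm ((z + s *\<^sub>R (c - z)) - y) \<le> t" using s_step by (simp add: algebra_simps)
  ultimately have "inner g z \<le> inner g (z + s *\<^sub>R (c - z))" by (rule z_le)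
  then show ?thesis using \<open>0 < s\<close> by (simp add: inner_add_right zero_le_mult_iff)
qed

locale smooth_strongly_convex =
  fixes U :: "'a::real_inner set" and h :: "'a \<Rightarrow> real" and G :: "'a \<Rightarrow> 'a" and \<mu> L :: real
  assumes open_domain: "open U"
    and has_gradient: "\<And>y. y \<in> U \<Longrightarrow> (h has_derivative (\<lambda>d. inner (G y) d)) (at y)"
    and gradient_lipschitz: "\<And>y z. y \<in> U \<Longrightarrow> z \<in> U \<Longrightarrow> norm (G y - G z) \<le> L * norm (y - z)"
    and strongly_convex: "\<And>y z. y \<in> U \<Longrightarrow> z \<in> U \<Longrightarrow>
           h y + inner (G y) (z - y) + \<mu> / 2 * norm (z - y) ^ 2 \<le> h z"
    and mu_pos: "0 < \<mu>" and mu_le_L: "\<mu> \<le> L"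
begin

lemma tilted_first_order_lower_bound:
  assumes "x \<in> U" "y \<in> U"
  shows "(h x - \<mu> / 2 * norm x ^ 2) + inner (G x - \<mu> *\<^sub>R x) (y - x) \<le> h y - \<mu> / 2 * norm y ^ 2"
  using strongly_convex[OF assms] bregman_quadratic_tilt[of "h y" \<mu> y "h x" x "G x"] by linarith

lemma tilted_quadratic_upper_bound:
  assumes "closed_segment x y \<subseteq> U"
  shows "h y - \<mu> / 2 * norm y ^ 2
    \<le> (h x - \<mu> / 2 * norm x ^ 2) + inner (G x - \<mu> *\<^sub>R x) (y - x) + (L - \<mu>) / 2 * norm (y - x) ^ 2"
proof -
  have "(L - \<mu>) / 2 * norm (y - x) ^ 2 = L / 2 * norm (y - x) ^ 2 - \<mu> / 2 * norm (y - x) ^ 2"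
    by (simp add: diff_divide_distrib left_diff_distrib)
  then show ?thesis
    using lipschitz_gradient_quadratic_upper_bound[OF has_gradient gradient_lipschitz assms]
      bregman_quadratic_tilt[of "h y" \<mu> y "h x" x "G x"]
    by linarith
qed

text \<open>The auxiliary points of the co-coercivity argument may leave \<open>U\<close>, so it is first proved
  for points whose \<open>R\<close>-balls lie in \<open>U\<close> and which are close relative to \<open>R\<close>.  The constant
  \<open>\<Lambda> > L\<close> keeps the smoothness constant \<open>\<Lambda> - \<mu>\<close> of the tilted function positive even when
  \<open>\<mu> = L\<close>.\<close>

lemma cocoercive_local:
  assumes "L < \<Lambda>" and "cball v R \<subseteq> U" "cball w R \<subseteq> U"
    and close: "(L + \<mu>) * norm (w - v) \<le> (\<Lambda> - \<mu>) * R"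
  shows "norm (G w - G v) ^ 2 + \<mu> * \<Lambda> * norm (w - v) ^ 2 \<le> (\<Lambda> + \<mu>) * inner (G w - G v) (w - v)"
proof -
  define K where "K = \<Lambda> - \<mu>"
  define H where "H x = G x - \<mu> *\<^sub>R x" for x
  have "K > 0" using assms(1) mu_le_L by (simp add: K_def)
  have convex: "(h x - \<mu> / 2 * norm x ^ 2) + inner (H x) (y - x) \<le> h y - \<mu> / 2 * norm y ^ 2"
    if "x \<in> U" "y \<in> U" for x y
    using tilted_first_order_lower_bound[OF that] by (simp add: H_def)
  have smooth: "h y - \<mu> / 2 * norm y ^ 2
      \<le> (h x - \<mu> / 2 * norm x ^ 2) + inner (H x) (y - x) + K / 2 * norm (y - x) ^ 2"
    if "closed_segment x y \<subseteq> U" for x y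
  proof -
    have "(L - \<mu>) / 2 * norm (y - x) ^ 2 \<le> K / 2 * norm (y - x) ^ 2"
      using assms(1) by (intro mult_right_mono) (auto simp: K_def)
    then show ?thesis using tilted_quadratic_upper_bound[OF that] by (simp add: H_def)
  qed
  have "0 \<le> K * R" using close mu_pos mu_le_L unfolding K_def
    by (metis add_nonneg_nonneg less_imp_le mult_nonneg_nonneg norm_ge_zero order_trans)
  then have "0 \<le> R" using \<open>K > 0\<close> by (simp add: zero_le_mult_iff)
  then have "v \<in> U" "w \<in> U" using assms(2,3) by auto
  have H_diff: "H w - H v = (G w - G v) - \<mu> *\<^sub>R (w - v)" by (simp add: H_def algebra_simps)
  have "norm (H w - H v) \<le> norm (G w - G v) + \<mu> * norm (w - v)"
    unfolding H_diff using norm_triangle_ineq4[of "G w - G v" "\<mu> *\<^sub>R (w - v)"] mu_pos by simp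
  also have "\<dots> \<le> (L + \<mu>) * norm (w - v)"
    using gradient_lipschitz[OF \<open>w \<in> U\<close> \<open>v \<in> U\<close>] by (simp add: algebra_simps)
  finally have "norm ((1 / K) *\<^sub>R (H w - H v)) \<le> R"
    using close \<open>K > 0\<close> by (simp add: K_def divide_le_eq mult.commute)
  then have "w - (1 / K) *\<^sub>R (H w - H v) \<in> cball w R" "v - (1 / K) *\<^sub>R (H v - H w) \<in> cball v R"
    by (simp_all add: dist_norm norm_minus_commute)
  then have "closed_segment w (w - (1 / K) *\<^sub>R (H w - H v)) \<subseteq> U"
    and "closed_segment v (v - (1 / K) *\<^sub>R (H v - H w)) \<subseteq> U"
    using \<open>0 \<le> R\<close> assms(2,3) by (meson closed_segment_subset convex_cball centre_in_cball order_trans)+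
  then have "norm (H w - H v) ^ 2 \<le> K * inner (H w - H v) (w - v)"
    by (intro convex_smooth_cocoercive[OF convex smooth \<open>K > 0\<close> \<open>v \<in> U\<close> \<open>w \<in> U\<close>])
  then show ?thesis unfolding H_diff K_def by (rule cocoercive_of_shifted)
qed

text \<open>Co-coercivity with constants \<open>\<mu>, \<Lambda>\<close> says exactly that \<open>x - 2 / (\<Lambda> + \<mu>) G x\<close> is
  \<open>(\<Lambda> - \<mu>) / (\<Lambda> + \<mu>)\<close>-Lipschitz, and Lipschitz bounds for nearby pairs chain along a segment.\<close>

lemma cocoercive_on_segment_strict:
  assumes "L < \<Lambda>" and segment: "closed_segment v w \<subseteq> U"
  shows "norm (G w - G v) ^ 2 + \<mu> * \<Lambda> * norm (w - v) ^ 2 \<le> (\<Lambda> + \<mu>) * inner (G w - G v) (w - v)"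
proof -
  obtain R where "R > 0" and R: "(\<Union>x\<in>closed_segment v w. cball x R) \<subseteq> U"
    using compact_subset_open_imp_cball_epsilon_subset[OF compact_segment open_domain segment] by blast
  have "\<mu> \<le> \<Lambda>" "0 < \<Lambda> + \<mu>" using assms(1) mu_pos mu_le_L by auto
  note step_iff = cocoercive_iff_gradient_step_contraction[OF this]
  define T where "T x = x - (2 / (\<Lambda> + \<mu>)) *\<^sub>R G x" for x
  have T_diff: "T p - T q = (p - q) - (2 / (\<Lambda> + \<mu>)) *\<^sub>R (G p - G q)" for p q
    by (simp add: T_def scaleR_diff_right)
  have "norm (T w - T v) \<le> (\<Lambda> - \<mu>) / (\<Lambda> + \<mu>) * norm (w - v)"
  proof (rule norm_diff_le_of_local_lipschitz_on_segment)
    show "0 < (\<Lambda> - \<mu>) * R / (L + \<mu>)" using assms(1) mu_pos mu_le_L \<open>R > 0\<close> by simp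
    fix p q assume p: "p \<in> closed_segment v w" and q: "q \<in> closed_segment v w"
      and "norm (p - q) \<le> (\<Lambda> - \<mu>) * R / (L + \<mu>)"
    then have "(L + \<mu>) * norm (p - q) \<le> (\<Lambda> - \<mu>) * R"
      using mu_pos mu_le_L by (simp add: pos_le_divide_eq mult.commute)
    moreover have "cball p R \<subseteq> U" "cball q R \<subseteq> U" using R p q by auto
    ultimately show "norm (T p - T q) \<le> (\<Lambda> - \<mu>) / (\<Lambda> + \<mu>) * norm (p - q)"
      using cocoercive_local[OF assms(1)] step_iff unfolding T_diff by blast
  qed
  then show ?thesis using step_iff unfolding T_diff by blast
qed

lemma cocoercive_on_segment:
  assumes "closed_segment v w \<subseteq> U"
  shows "norm (G w - G v) ^ 2 + \<mu> * L * norm (w - v) ^ 2 \<le> (L + \<mu>) * inner (G w - G v) (w - v)"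
proof -
  define A B C where "A = norm (G w - G v) ^ 2" and "B = norm (w - v) ^ 2"
    and "C = inner (G w - G v) (w - v)"
  have "((\<lambda>\<Lambda>. (\<Lambda> + \<mu>) * C - \<mu> * \<Lambda> * B) \<longlongrightarrow> (L + \<mu>) * C - \<mu> * L * B) (at_right L)"
    by (intro tendsto_intros)
  moreover have "\<forall>\<^sub>F \<Lambda> in at_right L. A \<le> (\<Lambda> + \<mu>) * C - \<mu> * \<Lambda> * B"
    using eventually_at_right_less[of L]
  proof eventually_elim
    case (elim \<Lambda>)
    from cocoercive_on_segment_strict[OF this assms] show ?case by (simp add: A_def B_def C_def)
  qed
  ultimately have "A \<le> (L + \<mu>) * C - \<mu> * L * B" by (rule tendsto_lowerbound) simp
  then show ?thesis by (simp add: A_def B_def C_def)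
qed

lemma gradient_inner_lower_bound:
  assumes "closed_segment c y \<subseteq> U"
  shows "2 * sqrt (\<mu> * L) / (L + \<mu>) * norm (y - c) * norm (G y - G c) \<le> inner (G y - G c) (y - c)"
proof -
  have "sqrt (\<mu> * L) ^ 2 = \<mu> * L" using mu_pos mu_le_L by simp
  moreover have "0 \<le> (norm (G y - G c) - sqrt (\<mu> * L) * norm (y - c)) ^ 2" by simp
  ultimately have "2 * sqrt (\<mu> * L) * norm (y - c) * norm (G y - G c)
      \<le> norm (G y - G c) ^ 2 + \<mu> * L * norm (y - c) ^ 2"
    unfolding power2_diff power_mult_distrib by (simp add: algebra_simps)
  also have "\<dots> \<le> (L + \<mu>) * inner (G y - G c) (y - c)" by (rule cocoercive_on_segment[OF assms])
  finally show ?thesis using mu_pos mu_le_L by (simp add: pos_divide_le_eq mult.commute)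
qed

lemma gradient_eq_imp_eq:
  assumes "closed_segment c y \<subseteq> U" and "G y = G c"
  shows "y = c"
proof -
  have "\<mu> * L * norm (y - c) ^ 2 \<le> 0" using cocoercive_on_segment[OF assms(1)] assms(2) by simp
  moreover have "0 < \<mu> * L" using mu_pos mu_le_L by simp
  ultimately show ?thesis using mu_pos mu_le_L by (auto simp: mult_le_0_iff)
qed

lemma cball_linear_step_contraction:
  assumes "convex X" "X \<subseteq> U"
    and c_min: "is_arg_min h (\<lambda>y. y \<in> X) c" and "y \<in> X"
    and z_min: "is_arg_min (\<lambda>z. inner (G y) z)
                  (\<lambda>z. z \<in> X \<inter> cball y ((2 * sqrt (\<mu> * L) / (L + \<mu>)) * norm (y - c))) z"
  shows "norm (z - c) ^ 2 \<le> ((L - \<mu>) / (L + \<mu>)) ^ 2 * norm (y - c) ^ 2"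
proof -
  define t where "t = 2 * sqrt (\<mu> * L) / (L + \<mu>) * norm (y - c)"
  have "c \<in> X" and c_le: "\<And>v. v \<in> X \<Longrightarrow> h c \<le> h v"
    using c_min by (auto simp: is_arg_min_linorder)
  have "z \<in> X" and "norm (z - y) \<le> t"
    using z_min by (auto simp: is_arg_min_linorder t_def dist_norm norm_minus_commute)
  have "closed_segment c y \<subseteq> U" using assms(1,2) \<open>c \<in> X\<close> \<open>y \<in> X\<close> by (meson closed_segment_subset order_trans)
  have "inner (z - y) (y - c) \<le> - (t ^ 2)"
  proof (cases "norm (z - y) = t \<and> 0 \<le> inner (z - y) (c - z)")
    case True
    have "inner (z - y) (y - c) = - inner (z - y) (c - z) - norm (z - y) ^ 2"
      by (simp add: power2_norm_eq_inner algebra_simps)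
    with True show ?thesis by simp
  next
    case False
    with \<open>norm (z - y) \<le> t\<close> have "norm (z - y) < t \<or> inner (z - y) (c - z) < 0" by auto
    with cball_linear_arg_min_first_order[OF \<open>convex X\<close> \<open>c \<in> X\<close> z_min[folded t_def]]
    have "0 \<le> inner (G y) (c - z)" .
    moreover have "0 \<le> inner (G c) (z - c)"
      using arg_min_convex_first_order[OF has_gradient \<open>convex X\<close> \<open>c \<in> X\<close> \<open>z \<in> X\<close> c_le]
        \<open>c \<in> X\<close> assms(2) by blast
    ultimately have "inner (G y - G c) ((z - y) + (y - c)) \<le> 0"
      by (simp add: inner_diff_left inner_diff_right)
    moreover have "t * norm (G y - G c) \<le> inner (G y - G c) (y - c)"
      using gradient_inner_lower_bound[OF \<open>closed_segment c y \<subseteq> U\<close>] by (simp add: t_def)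
    moreover have "t = 0" if "G y - G c = 0"
      using gradient_eq_imp_eq[OF \<open>closed_segment c y \<subseteq> U\<close>] that by (simp add: t_def)
    ultimately show ?thesis
      using cball_halfspace_inner_bound[OF \<open>norm (z - y) \<le> t\<close>] by blast
  qed
  with \<open>norm (z - y) \<le> t\<close> have "norm ((z - y) + (y - c)) ^ 2 \<le> norm (y - c) ^ 2 - t ^ 2"
    by (rule norm_add_sq_le_of_inner_le)
  also have "\<dots> = ((L - \<mu>) / (L + \<mu>)) ^ 2 * norm (y - c) ^ 2"
    unfolding t_def using contraction_factor_sq mu_pos mu_le_L by simp
  finally show ?thesis by simp
qed

end

lemma norm_diff_le_of_contraction_around:
  fixes x y c x\<^sub>0 :: "'a::real_normed_vector"
  assumes "norm (y - c) ^ 2 \<le> \<rho> ^ 2 * norm (x - c) ^ 2" and "norm (c - x\<^sub>0) \<le> D" and "0 \<le> \<rho>"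
  shows "norm (y - x\<^sub>0) \<le> \<rho> * norm (x - x\<^sub>0) + (1 + \<rho>) * D"
proof -
  have "norm (y - c) ^ 2 \<le> (\<rho> * norm (x - c)) ^ 2" using assms(1) by (simp only: power_mult_distrib)
  then have "norm (y - c) \<le> \<rho> * norm (x - c)" by (rule power2_le_imp_le) (simp add: assms(3))
  also have "\<dots> \<le> \<rho> * (norm (x - x\<^sub>0) + D)"
  proof -
    have "norm (x - c) \<le> norm (x - x\<^sub>0) + norm (x\<^sub>0 - c)" by (rule norm_diff_triangle_le) auto
    then show ?thesis using assms(2,3) by (intro mult_left_mono) (simp_all add: norm_minus_commute)
  qed
  finally have contracted: "norm (y - c) \<le> \<rho> * (norm (x - x\<^sub>0) + D)" .
  have "norm (y - x\<^sub>0) \<le> norm (y - c) + norm (c - x\<^sub>0)" by (rule norm_diff_triangle_le) auto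
  also have "\<dots> \<le> \<rho> * (norm (x - x\<^sub>0) + D) + D" using contracted assms(2) by (rule add_mono)
  also have "\<dots> = \<rho> * norm (x - x\<^sub>0) + (1 + \<rho>) * D" by (simp add: algebra_simps)
  finally show ?thesis .
qed

lemma affine_recurrence_bound:
  fixes e :: "nat \<Rightarrow> real"
  assumes step: "\<And>k. e (Suc k) \<le> r * e k + b" and "0 \<le> r" "r < 1" "0 \<le> b"
  shows "e k \<le> r ^ k * e 0 + b / (1 - r)"
proof (induction k)
  case 0
  then show ?case using assms by simp
next
  case (Suc k)
  have "e (Suc k) \<le> r * (r ^ k * e 0 + b / (1 - r)) + b"
    using step[of k] mult_left_mono[OF Suc.IH \<open>0 \<le> r\<close>] by linarith
  also have "\<dots> = r ^ Suc k * e 0 + b / (1 - r)" using \<open>r < 1\<close> by (simp add: field_simps)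
  finally show ?case .
qed

lemma sum_lists_length_Suc:
  assumes "finite A"
  shows "(\<Sum>hs \<in> {hs. set hs \<subseteq> A \<and> length hs = Suc k}. a hs)
       = (\<Sum>hs \<in> {hs. set hs \<subseteq> A \<and> length hs = k}. \<Sum>i\<in>A. a (hs @ [i]))"
proof -
  let ?S = "\<lambda>k. {hs. set hs \<subseteq> A \<and> length hs = k}"
  have "?S (Suc k) = (\<lambda>(hs, i). hs @ [i]) ` (?S k \<times> A)"
  proof (intro equalityI subsetI)
    fix l assume "l \<in> ?S (Suc k)"
    moreover from this obtain hs i where "l = hs @ [i]" "length hs = k"
      by (auto simp: length_Suc_conv_rev)
    ultimately show "l \<in> (\<lambda>(hs, i). hs @ [i]) ` (?S k \<times> A)" by (auto simp: image_iff)
  qed auto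
  moreover have "inj_on (\<lambda>(hs, i). hs @ [i]) (?S k \<times> A)" by (auto simp: inj_on_def)
  ultimately show ?thesis by (simp add: sum.reindex sum.cartesian_product case_prod_unfold)
qed

text \<open>The expectation over \<open>k\<close> independent indices drawn uniformly from \<open>{..<n}\<close>: a history
  \<open>hs\<close> lists the indices sampled so far, oldest first.\<close>

definition uniform_history_mean :: "nat \<Rightarrow> nat \<Rightarrow> (nat list \<Rightarrow> real) \<Rightarrow> real" where
  "uniform_history_mean n k a =
     1 / real n ^ k * (\<Sum>hs \<in> {hs. set hs \<subseteq> {..<n} \<and> length hs = k}. a hs)"

lemma uniform_history_mean_0: "uniform_history_mean n 0 a = a []"
proof -
  have "{hs. set hs \<subseteq> {..<n} \<and> length hs = 0} = {[]}" by auto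
  then show ?thesis by (simp add: uniform_history_mean_def)
qed

lemma uniform_history_mean_Suc:
  assumes "n > 0"
  shows "uniform_history_mean n (Suc k) a = uniform_history_mean n k (\<lambda>hs. (\<Sum>i<n. a (hs @ [i])) / real n)"
  using assms unfolding uniform_history_mean_def sum_lists_length_Suc[OF finite_lessThan]
  by (simp add: sum_divide_distrib[symmetric])

lemma uniform_history_mean_mono:
  assumes "\<And>hs. set hs \<subseteq> {..<n} \<Longrightarrow> a hs \<le> b hs"
  shows "uniform_history_mean n k a \<le> uniform_history_mean n k b"
  unfolding uniform_history_mean_def using assms by (intro mult_left_mono sum_mono) auto

lemma uniform_history_mean_affine:
  fixes c d :: real
  assumes "n > 0"
  shows "uniform_history_mean n k (\<lambda>hs. c * a hs + d) = c * uniform_history_mean n k a + d"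
  using assms unfolding uniform_history_mean_def
  by (simp add: sum.distrib sum_distrib_left card_lists_length_eq algebra_simps)

lemma uniform_history_mean_bound:
  fixes n :: nat and a :: "nat list \<Rightarrow> real" and \<rho> :: "nat \<Rightarrow> real"
  defines "\<rho>bar \<equiv> 1 / real n * (\<Sum>i<n. \<rho> i)"
  assumes "n > 0" and \<rho>: "\<And>i. i < n \<Longrightarrow> 0 \<le> \<rho> i \<and> \<rho> i < 1" and "0 \<le> D"
    and step: "\<And>hs i. set hs \<subseteq> {..<n} \<Longrightarrow> i < n \<Longrightarrow> a (hs @ [i]) \<le> \<rho> i * a hs + (1 + \<rho> i) * D"
  shows "uniform_history_mean n k a \<le> \<rho>bar ^ k * a [] + (1 + \<rho>bar) / (1 - \<rho>bar) * D"
proof -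
  have "0 \<le> \<rho>bar" unfolding \<rho>bar_def using \<rho> by (intro mult_nonneg_nonneg sum_nonneg) auto
  have "(\<Sum>i<n. \<rho> i) < (\<Sum>i<n. 1)" using \<rho> \<open>n > 0\<close> by (intro sum_strict_mono) auto
  then have "\<rho>bar < 1" using \<open>n > 0\<close> by (simp add: \<rho>bar_def)
  have "(\<Sum>i<n. a (hs @ [i])) / real n \<le> \<rho>bar * a hs + (1 + \<rho>bar) * D"
    if "set hs \<subseteq> {..<n}" for hs
  proof -
    have "(\<Sum>i<n. a (hs @ [i])) \<le> (\<Sum>i<n. \<rho> i * a hs + (1 + \<rho> i) * D)"
      using step that by (intro sum_mono) auto
    also have "\<dots> = (\<Sum>i<n. \<rho> i) * a hs + (real n + (\<Sum>i<n. \<rho> i)) * D"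
      by (simp add: sum.distrib sum_distrib_right sum_distrib_left algebra_simps)
    also have "\<dots> = real n * (\<rho>bar * a hs + (1 + \<rho>bar) * D)"
      using \<open>n > 0\<close> by (simp add: \<rho>bar_def algebra_simps)
    finally show ?thesis using \<open>n > 0\<close> by (simp add: divide_le_eq mult.commute)
  qed
  then have "uniform_history_mean n (Suc k) a \<le> \<rho>bar * uniform_history_mean n k a + (1 + \<rho>bar) * D"
    for k
    unfolding uniform_history_mean_Suc[OF \<open>n > 0\<close>] uniform_history_mean_affine[OF \<open>n > 0\<close>, symmetric]
    by (rule uniform_history_mean_mono)
  from affine_recurrence_bound[of "\<lambda>k. uniform_history_mean n k a", OF this]
  show ?thesis using \<open>0 \<le> \<rho>bar\<close> \<open>\<rho>bar < 1\<close> \<open>0 \<le> D\<close> by (simp add: uniform_history_mean_0)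
qed

theorem theorem13:
  fixes X U :: "'a::euclidean_space set"
    and n :: nat
    and f :: "nat \<Rightarrow> 'a \<Rightarrow> real"
    and g :: "nat \<Rightarrow> 'a \<Rightarrow> 'a"
    and \<mu> L :: "nat \<Rightarrow> real"
    and xstar :: 'a
    and xs :: "nat \<Rightarrow> 'a"
    and x :: "nat list \<Rightarrow> 'a"
  assumes n_pos: "n \<ge> 1"
    and X_ne: "X \<noteq> {}" and X_closed: "closed X" and X_convex: "convex X"
    and U_open: "open U" and U_convex: "convex U" and XU: "X \<subseteq> U"
    and grad: "\<And>i y. i < n \<Longrightarrow> y \<in> U \<Longrightarrow>
                 (f i has_derivative (\<lambda>h. inner (g i y) h)) (at y)"
    and mu_pos: "\<And>i. i < n \<Longrightarrow> 0 < \<mu> i"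
    and mu_le_L: "\<And>i. i < n \<Longrightarrow> \<mu> i \<le> L i"
    and strongly_convex: "\<And>i y z. i < n \<Longrightarrow> y \<in> U \<Longrightarrow> z \<in> U \<Longrightarrow>
                 f i z \<ge> f i y + inner (g i y) (z - y) + \<mu> i / 2 * norm (z - y) ^ 2"
    and smooth: "\<And>i y z. i < n \<Longrightarrow> y \<in> U \<Longrightarrow> z \<in> U \<Longrightarrow>
                 norm (g i y - g i z) \<le> L i * norm (y - z)"
    and xstar_min: "is_arg_min (\<lambda>y. (1 / real n) * (\<Sum>i<n. f i y)) (\<lambda>y. y \<in> X) xstar"
    and xs_min: "\<And>i. i < n \<Longrightarrow> is_arg_min (f i) (\<lambda>y. y \<in> X) (xs i)"
    and x0: "x [] \<in> X"
    and step: "\<And>hs i. set hs \<subseteq> {..<n} \<Longrightarrow> i < n \<Longrightarrow>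
                 is_arg_min (\<lambda>z. inner (g i (x hs)) z)
                   (\<lambda>z. z \<in> X \<inter> cball (x hs)
                        ((2 * sqrt (\<mu> i * L i) / (L i + \<mu> i)) * norm (x hs - xs i)))
                   (x (hs @ [i]))"
  shows "(\<forall>hs i. set hs \<subseteq> {..<n} \<longrightarrow> i < n \<longrightarrow>
            norm (x (hs @ [i]) - xs i) ^ 2
              \<le> ((L i - \<mu> i) / (L i + \<mu> i)) ^ 2 * norm (x hs - xs i) ^ 2)
       \<and> (\<forall>k::nat.
            (let \<rho>bar = (1 / real n) * (\<Sum>i<n. (L i - \<mu> i) / (L i + \<mu> i));
                 D = Max ((\<lambda>i. norm (xs i - xstar)) ` {..<n})
             in (1 / real n ^ k) * (\<Sum>hs \<in> {hs. set hs \<subseteq> {..<n} \<and> length hs = k}.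
                                        norm (x hs - xstar))
                \<le> \<rho>bar ^ k * norm (x [] - xstar) + (1 + \<rho>bar) / (1 - \<rho>bar) * D))"
proof -
  \<comment> \<open>The bound holds for every reference point \<open>xstar\<close>.\<close>
  define \<rho> where "\<rho> i = (L i - \<mu> i) / (L i + \<mu> i)" for i
  define D where "D = Max ((\<lambda>i. norm (xs i - xstar)) ` {..<n})"
  have f_i: "smooth_strongly_convex U (f i) (g i) (\<mu> i) (L i)" if "i < n" for i
    using that U_open grad smooth strongly_convex mu_pos mu_le_L by unfold_locales auto
  have iterates_in_X: "x hs \<in> X" if "set hs \<subseteq> {..<n}" for hs
    using that
  proof (induction hs rule: rev_induct)
    case (snoc i hs)
    then show ?case using step[of hs i] by (simp add: is_arg_min_def)
  qed (simp add: x0)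
  have contraction: "norm (x (hs @ [i]) - xs i) ^ 2 \<le> \<rho> i ^ 2 * norm (x hs - xs i) ^ 2"
    if "set hs \<subseteq> {..<n}" "i < n" for hs i
    using smooth_strongly_convex.cball_linear_step_contraction[OF f_i[OF that(2)] X_convex XU
        xs_min[OF that(2)] iterates_in_X[OF that(1)] step[OF that]]
    unfolding \<rho>_def .
  have \<rho>_range: "0 \<le> \<rho> i \<and> \<rho> i < 1" if "i < n" for i
    using mu_pos[OF that] mu_le_L[OF that] by (simp add: \<rho>_def)
  have D_ge: "norm (xs i - xstar) \<le> D" if "i < n" for i
    unfolding D_def using that by (intro Max_ge) auto
  have "0 < n" "0 \<le> D" using n_pos order_trans[OF norm_ge_zero D_ge[of 0]] by auto
  have "norm (x (hs @ [i]) - xstar) \<le> \<rho> i * norm (x hs - xstar) + (1 + \<rho> i) * D"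
    if "set hs \<subseteq> {..<n}" "i < n" for hs i
    using norm_diff_le_of_contraction_around[OF contraction[OF that] D_ge[OF that(2)]]
      \<rho>_range[OF that(2)] by blast
  note mean_bound = uniform_history_mean_bound[where a = "\<lambda>hs. norm (x hs - xstar)",
      OF \<open>0 < n\<close> \<rho>_range \<open>0 \<le> D\<close> this]
  show ?thesis unfolding Let_def
  proof (intro conjI allI impI)
    show "norm (x (hs @ [i]) - xs i) ^ 2 \<le> ((L i - \<mu> i) / (L i + \<mu> i)) ^ 2 * norm (x hs - xs i) ^ 2"
      if "set hs \<subseteq> {..<n}" "i < n" for hs i
      using contraction[OF that] unfolding \<rho>_def .
  qed (rule mean_bound[unfolded uniform_history_mean_def \<rho>_def D_def])
qed

end
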